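(* Let $\mathfrak{B}=\bigcup_{\alpha<\xi}B_\alpha$ be a tightly $\sigma$-filtered Boolean algebra with its fixed chain $(B_\alpha)_{\alpha<\xi}$ and countable subalgebras $R_\alpha,S_\alpha$. Let $\Gamma_1,\Gamma_2\subseteq\xi$ be such that $\Gamma_1$, $\Gamma_2$ and $\Gamma_1\cap\Gamma_2$ are all saturated. Then the inclusions $E(\Gamma_1\cap\Gamma_2)\subseteq E(\Gamma_1)\subseteq E(\Gamma_1\cup\Gamma_2)$, $E(\Gamma_1\cap\Gamma_2)\subseteq E(\Gamma_2)\subseteq E(\Gamma_1\cup\Gamma_2)$ form a push-out diagram; that is, $\langle E(\Gamma_1)\cup E(\Gamma_2)\rangle=E(\Gamma_1\cup\Gamma_2)$, $E(\Gamma_1)\cap E(\Gamma_2)=E(\Gamma_1\cap\Gamma_2)$, and $E(\Gamma_1)$ and $E(\Gamma_2)$ commute.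
   Context: For a subset $X$ of a Boolean algebra, $\langle X\rangle$ is the subalgebra generated by $X$. Two subalgebras $A,S$ commute if whenever $a\in A$, $s\in S$, $a\wedge s=0$, there exist $b_1,b_2\in A\cap S$ with $a\le b_1$, $s\le b_2$, $b_1\wedge b_2=0$. A square of inclusions $R\subseteq A\subseteq B$, $R\subseteq S\subseteq B$ is a push-out diagram if $\langle A\cup S\rangle=B$, $A\cap S=R$, and $A,S$ commute. $\mathfrak{B}$ is tightly $\sigma$-filtered via an increasing chain of subalgebras $(B_\alpha)_{\alpha<\xi}$ ($\xi$ an ordinal) with $B_0=\{0,1\}$, $\mathfrak{B}=\bigcup_{\alpha<\xi}B_\alpha$, $B_\alpha=\bigcup_{\beta<\alpha}B_\beta$ for limit $\alpha$, and for each $\alpha<\xi$ countable subalgebras $R_\alpha,S_\alpha\subseteq\mathfrak{B}$ such that $R_\alpha\subseteq B_\alpha\subseteq B_{\alpha+1}$, $R_\alpha\subseteq S_\alpha\subseteq B_{\alpha+1}$ is a push-out diagram. For $\Gamma\subseteq\xi$, $E(\Gamma)=\langle\bigcup_{i\in\Gamma}S_i\rangle$. A set $\Gamma\subseteq\xi$ is saturated if $R_\gamma\subseteq E(\Gamma\cap\gamma)$ for every $\gamma\in\Gamma$. *)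

theory Defs
  imports Main "HOL-Library.Countable_Set"
begin

text \<open>The Boolean algebra is the whole type 'a (class boolean_algebra);
  subalgebras are subsets containing bot and closed under sup, inf, complement.\<close>

definition subalgebra :: "'a::boolean_algebra set \<Rightarrow> bool" where
  "subalgebra A \<longleftrightarrow> bot \<in> A \<and> top \<in> A \<and>
     (\<forall>x\<in>A. \<forall>y\<in>A. sup x y \<in> A \<and> inf x y \<in> A) \<and> (\<forall>x\<in>A. - x \<in> A)"

definition gen :: "'a::boolean_algebra set \<Rightarrow> 'a set" where
  "gen X = \<Inter> {A. subalgebra A \<and> X \<subseteq> A}"

definition commute :: "'a::boolean_algebra set \<Rightarrow> 'a set \<Rightarrow> bool" where
  "commute A S \<longleftrightarrow> (\<forall>a\<in>A. \<forall>s\<in>S. inf a s = bot \<longrightarrow>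
     (\<exists>b1\<in>A \<inter> S. \<exists>b2\<in>A \<inter> S. a \<le> b1 \<and> s \<le> b2 \<and> inf b1 b2 = bot))"

definition push_out :: "'a::boolean_algebra set \<Rightarrow> 'a set \<Rightarrow> 'a set \<Rightarrow> 'a set \<Rightarrow> bool" where
  "push_out R A S B \<longleftrightarrow> R \<subseteq> A \<and> A \<subseteq> B \<and> R \<subseteq> S \<and> S \<subseteq> B \<and>
     gen (A \<union> S) = B \<and> A \<inter> S = R \<and> commute A S"

text \<open>Ordinals below/at \<xi> are modelled by elements of a well-ordered type 'i;
  the successor of \<alpha> is the least element above \<alpha>.\<close>
definition succ_ix :: "'i::wellorder \<Rightarrow> 'i" where
  "succ_ix \<alpha> = (LEAST \<beta>. \<alpha> < \<beta>)"

definition is_limit_ix :: "'i::wellorder \<Rightarrow> bool" where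
  "is_limit_ix \<alpha> \<longleftrightarrow> (\<exists>\<beta>. \<beta> < \<alpha>) \<and> (\<forall>\<beta><\<alpha>. \<exists>\<gamma>. \<beta> < \<gamma> \<and> \<gamma> < \<alpha>)"

definition is_zero_ix :: "'i::wellorder \<Rightarrow> bool" where
  "is_zero_ix \<alpha> \<longleftrightarrow> (\<forall>\<beta>. \<not> \<beta> < \<alpha>)"

text \<open>B is considered on indices \<le> \<xi> (B at \<xi> itself only occurs as B (\<alpha>+1) when \<xi> = \<alpha>+1).\<close>
definition tightly_sigma_filtered ::
  "'i::wellorder \<Rightarrow> ('i \<Rightarrow> 'a::boolean_algebra set) \<Rightarrow> ('i \<Rightarrow> 'a set) \<Rightarrow> ('i \<Rightarrow> 'a set) \<Rightarrow> bool" where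
  "tightly_sigma_filtered \<xi> B R S \<longleftrightarrow>
     (\<forall>\<alpha>\<le>\<xi>. subalgebra (B \<alpha>)) \<and>
     (\<forall>\<alpha>\<le>\<xi>. \<forall>\<beta>\<le>\<alpha>. B \<beta> \<subseteq> B \<alpha>) \<and>
     (\<forall>\<alpha>\<le>\<xi>. is_zero_ix \<alpha> \<longrightarrow> B \<alpha> = {bot, top}) \<and>
     (UNIV = (\<Union>\<alpha>\<in>{..<\<xi>}. B \<alpha>)) \<and>
     (\<forall>\<alpha>\<le>\<xi>. is_limit_ix \<alpha> \<longrightarrow> B \<alpha> = (\<Union>\<beta>\<in>{..<\<alpha>}. B \<beta>)) \<and>
     (\<forall>\<alpha><\<xi>. subalgebra (R \<alpha>) \<and> subalgebra (S \<alpha>) \<and> countable (R \<alpha>) \<and> countable (S \<alpha>) \<and>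
        push_out (R \<alpha>) (B \<alpha>) (S \<alpha>) (B (succ_ix \<alpha>)))"

definition E :: "('i \<Rightarrow> 'a::boolean_algebra set) \<Rightarrow> 'i set \<Rightarrow> 'a set" where
  "E S \<Gamma> = gen (\<Union>i\<in>\<Gamma>. S i)"

definition saturated :: "('i::wellorder \<Rightarrow> 'a::boolean_algebra set) \<Rightarrow> ('i \<Rightarrow> 'a set) \<Rightarrow> 'i set \<Rightarrow> bool" where
  "saturated R S \<Gamma> \<longleftrightarrow> (\<forall>\<gamma>\<in>\<Gamma>. R \<gamma> \<subseteq> E S (\<Gamma> \<inter> {..<\<gamma>}))"

end

theory Submission
  imports Defs
begin

text \<open>Say that a subalgebra \<open>D\<close> separates \<open>X\<close> from \<open>Y\<close> if every pair of disjoint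
  \<open>x \<in> X\<close>, \<open>y \<in> Y\<close> is split by some \<open>d \<in> D\<close> with \<open>x \<le> d\<close> and \<open>d \<sqinter> y = 0\<close>. By transfinite
  induction along the filtration, \<open>E(\<Gamma>\<^sub>1 \<inter> \<Gamma>\<^sub>2 \<inter> \<alpha>)\<close> separates \<open>E(\<Gamma>\<^sub>1 \<inter> \<alpha>)\<close> from
  \<open>E(\<Gamma>\<^sub>2 \<inter> \<alpha>)\<close>. Limit stages are directed unions. At a successor stage \<open>\<beta> + 1\<close> every new
  element is a finite join of meets \<open>a \<sqinter> s\<close> with \<open>s \<in> S\<^sub>\<beta>\<close>, and a disjointness between such
  meets is pushed down into \<open>B\<^sub>\<beta> \<inter> S\<^sub>\<beta> = R\<^sub>\<beta>\<close> by the commutation of \<open>B\<^sub>\<beta>\<close> and \<open>S\<^sub>\<beta>\<close>;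
  saturation places \<open>R\<^sub>\<beta>\<close> inside the relevant algebra, so the induction hypothesis applies.
  Separation of \<open>E(\<Gamma>\<^sub>1)\<close> from \<open>E(\<Gamma>\<^sub>2)\<close> by \<open>E(\<Gamma>\<^sub>1 \<inter> \<Gamma>\<^sub>2)\<close> yields both the intersection
  formula (separate \<open>x\<close> from \<open>-x\<close>) and commutation.\<close>

lemma subalgebra_bot: "subalgebra A \<Longrightarrow> bot \<in> A"
  and subalgebra_top: "subalgebra A \<Longrightarrow> top \<in> A"
  and subalgebra_sup: "subalgebra A \<Longrightarrow> x \<in> A \<Longrightarrow> y \<in> A \<Longrightarrow> sup x y \<in> A"
  and subalgebra_inf: "subalgebra A \<Longrightarrow> x \<in> A \<Longrightarrow> y \<in> A \<Longrightarrow> inf x y \<in> A"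
  and subalgebra_compl: "subalgebra A \<Longrightarrow> x \<in> A \<Longrightarrow> - x \<in> A"
  by (simp_all add: subalgebra_def)

lemma subalgebra_gen: "subalgebra (gen X)"
  unfolding subalgebra_def gen_def by auto

lemma gen_superset: "X \<subseteq> gen X"
  unfolding gen_def by auto

lemma gen_least: "subalgebra A \<Longrightarrow> X \<subseteq> A \<Longrightarrow> gen X \<subseteq> A"
  unfolding gen_def by auto

lemma gen_mono: "X \<subseteq> Y \<Longrightarrow> gen X \<subseteq> gen Y"
  by (meson gen_superset gen_least subalgebra_gen order_trans)

lemma gen_Un_gen_left: "gen (gen X \<union> Y) = gen (X \<union> Y)"
proof
  show "gen (gen X \<union> Y) \<subseteq> gen (X \<union> Y)"
    by (intro gen_least subalgebra_gen Un_least)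
      (use gen_mono gen_superset in blast)+
  show "gen (X \<union> Y) \<subseteq> gen (gen X \<union> Y)"
    by (rule gen_mono) (use gen_superset in blast)
qed

lemma gen_Un_gen: "gen (gen X \<union> gen Y) = gen (X \<union> Y)"
  by (metis gen_Un_gen_left sup_commute)

lemma gen_Union_directed:
  assumes nonempty: "\<X> \<noteq> {}"
    and directed: "\<And>X Y. X \<in> \<X> \<Longrightarrow> Y \<in> \<X> \<Longrightarrow> \<exists>Z\<in>\<X>. X \<union> Y \<subseteq> Z"
  shows "gen (\<Union>\<X>) = (\<Union>X\<in>\<X>. gen X)"
proof -
  let ?U = "\<Union>X\<in>\<X>. gen X"
  have "subalgebra ?U"
    unfolding subalgebra_def
  proof (intro conjI ballI)
    obtain X0 where "X0 \<in> \<X>" using nonempty by blast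
    then show "bot \<in> ?U" "top \<in> ?U"
      using subalgebra_bot[OF subalgebra_gen] subalgebra_top[OF subalgebra_gen] by blast+
  next
    fix u v assume "u \<in> ?U" "v \<in> ?U"
    then obtain X Y where X: "X \<in> \<X>" "u \<in> gen X" and Y: "Y \<in> \<X>" "v \<in> gen Y" by blast
    obtain Z where Z: "Z \<in> \<X>" "X \<union> Y \<subseteq> Z" using directed[OF X(1) Y(1)] by blast
    have "u \<in> gen Z" "v \<in> gen Z" using X(2) Y(2) Z(2) gen_mono[of X Z] gen_mono[of Y Z] by auto
    then have "sup u v \<in> gen Z" "inf u v \<in> gen Z"
      by (simp_all add: subalgebra_sup subalgebra_inf subalgebra_gen)
    with Z(1) show "sup u v \<in> ?U" "inf u v \<in> ?U" by blast+
  next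
    fix u assume "u \<in> ?U"
    then obtain X where "X \<in> \<X>" "u \<in> gen X" by blast
    then show "- u \<in> ?U" using subalgebra_compl[OF subalgebra_gen] by blast
  qed
  moreover have "\<Union>\<X> \<subseteq> ?U" using gen_superset by blast
  ultimately have "gen (\<Union>\<X>) \<subseteq> ?U" by (rule gen_least)
  moreover have "?U \<subseteq> gen (\<Union>\<X>)" by (intro UN_least gen_mono Union_upper)
  ultimately show ?thesis by (rule equalityI)
qed

inductive_set join_meets :: "'a::boolean_algebra set \<Rightarrow> 'a set \<Rightarrow> 'a set" for A S where
  join_meets_bot: "bot \<in> join_meets A S"
| join_meets_step: "a \<in> A \<Longrightarrow> s \<in> S \<Longrightarrow> x \<in> join_meets A S \<Longrightarrow> sup (inf a s) x \<in> join_meets A S"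

lemma join_meets_sup: "x \<in> join_meets A S \<Longrightarrow> y \<in> join_meets A S \<Longrightarrow> sup x y \<in> join_meets A S"
  by (induction x rule: join_meets.induct) (auto simp: sup_assoc intro: join_meets.intros)

lemma join_meets_inf_meet:
  assumes "y \<in> join_meets A S" "subalgebra A" "subalgebra S" "a \<in> A" "s \<in> S"
  shows "inf (inf a s) y \<in> join_meets A S"
  using assms
proof (induction y rule: join_meets.induct)
  case (join_meets_step c t y)
  have "inf (inf a s) (sup (inf c t) y) = sup (inf (inf a c) (inf s t)) (inf (inf a s) y)"
    by (simp add: inf_sup_distrib1 inf_assoc inf_left_commute)
  then show ?case
    using join_meets_step by (auto intro!: join_meets.intros subalgebra_inf)
qed (simp add: join_meets.intros)

lemma join_meets_inf:
  "x \<in> join_meets A S \<Longrightarrow> y \<in> join_meets A S \<Longrightarrow> subalgebra A \<Longrightarrow> subalgebra S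
   \<Longrightarrow> inf x y \<in> join_meets A S"
  by (induction x rule: join_meets.induct)
    (simp_all add: join_meets.intros inf_sup_distrib2 join_meets_sup join_meets_inf_meet)

lemma join_meets_left: "subalgebra S \<Longrightarrow> a \<in> A \<Longrightarrow> a \<in> join_meets A S"
  using join_meets_step[of a A top S bot] by (simp add: subalgebra_top join_meets_bot)

lemma join_meets_right: "subalgebra A \<Longrightarrow> s \<in> S \<Longrightarrow> s \<in> join_meets A S"
  using join_meets_step[of top A s S bot] by (simp add: subalgebra_top join_meets_bot)

lemma join_meets_compl:
  "x \<in> join_meets A S \<Longrightarrow> subalgebra A \<Longrightarrow> subalgebra S \<Longrightarrow> - x \<in> join_meets A S"
proof (induction x rule: join_meets.induct)
  case join_meets_bot
  then show ?case using join_meets_left[of S top A] by (simp add: subalgebra_top)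
next
  case (join_meets_step a s x)
  have "- sup (inf a s) x = inf (sup (- a) (- s)) (- x)" by simp
  moreover have "sup (- a) (- s) \<in> join_meets A S"
    using join_meets_step
    by (simp add: join_meets_sup join_meets_left join_meets_right subalgebra_compl)
  ultimately show ?case using join_meets_step by (simp add: join_meets_inf)
qed

lemma gen_Un_subset_join_meets:
  assumes "subalgebra A" "subalgebra S"
  shows "gen (A \<union> S) \<subseteq> join_meets A S"
proof (rule gen_least)
  show "subalgebra (join_meets A S)"
    unfolding subalgebra_def[of "join_meets A S"]
    using assms join_meets_bot join_meets_left[of S top A] join_meets_sup join_meets_inf
      join_meets_compl
    by (auto simp: subalgebra_top)
qed (use assms join_meets_left join_meets_right in blast)

definition separates :: "'a::boolean_algebra set \<Rightarrow> 'a set \<Rightarrow> 'a set \<Rightarrow> bool" where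
  "separates D X Y \<longleftrightarrow> (\<forall>x\<in>X. \<forall>y\<in>Y. inf x y = bot \<longrightarrow> (\<exists>d\<in>D. x \<le> d \<and> inf d y = bot))"

lemma separatesD:
  "separates D X Y \<Longrightarrow> x \<in> X \<Longrightarrow> y \<in> Y \<Longrightarrow> inf x y = bot \<Longrightarrow> \<exists>d\<in>D. x \<le> d \<and> inf d y = bot"
  unfolding separates_def by blast

lemma separates_singleton:
  "separates D {x} Y \<longleftrightarrow> (\<forall>y\<in>Y. inf x y = bot \<longrightarrow> (\<exists>d\<in>D. x \<le> d \<and> inf d y = bot))"
  unfolding separates_def by blast

lemma separates_singletons:
  "separates D {x} {y} \<longleftrightarrow> (inf x y = bot \<longrightarrow> (\<exists>d\<in>D. x \<le> d \<and> inf d y = bot))"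
  unfolding separates_def by blast

lemma separates_mono: "separates D X Y \<Longrightarrow> X' \<subseteq> X \<Longrightarrow> Y' \<subseteq> Y \<Longrightarrow> D \<subseteq> D' \<Longrightarrow> separates D' X' Y'"
  unfolding separates_def by blast

lemma separates_sym:
  assumes D: "subalgebra D" and sep: "separates D X Y"
  shows "separates D Y X"
  unfolding separates_def
proof (intro ballI impI)
  fix y x assume "y \<in> Y" "x \<in> X" "inf y x = bot"
  then obtain d where d: "d \<in> D" "x \<le> d" "inf d y = bot"
    using separatesD[OF sep] by (metis inf_commute)
  show "\<exists>d\<in>D. y \<le> d \<and> inf d x = bot"
  proof (intro bexI conjI)
    show "- d \<in> D" using D d by (simp add: subalgebra_compl)
    show "y \<le> - d" using d(3) by (metis inf_shunt inf_commute)
    show "inf (- d) x = bot" using d(2) by (metis inf_shunt inf_commute double_compl)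
  qed
qed

lemma separates_join_meets_left:
  assumes D: "subalgebra D" and meets: "\<And>a s. a \<in> A \<Longrightarrow> s \<in> S \<Longrightarrow> separates D {inf a s} Y"
  shows "separates D (join_meets A S) Y"
proof -
  have "\<exists>d\<in>D. x \<le> d \<and> inf d y = bot"
    if "x \<in> join_meets A S" "y \<in> Y" "inf x y = bot" for x y
    using that
  proof (induction x rule: join_meets.induct)
    case join_meets_bot
    then show ?case using D by (intro bexI[of _ bot]) (auto simp: subalgebra_bot)
  next
    case (join_meets_step a s x)
    have "inf (inf a s) y = bot" "inf x y = bot"
      using join_meets_step.prems(2) by (simp_all add: inf_sup_distrib2)
    then obtain d1 d2 where "d1 \<in> D" "inf a s \<le> d1" "inf d1 y = bot"
      "d2 \<in> D" "x \<le> d2" "inf d2 y = bot"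
      using separatesD[OF meets] join_meets_step by blast
    then show ?case
      by (intro bexI[of _ "sup d1 d2"])
        (auto simp: D subalgebra_sup inf_sup_distrib2 intro: sup.coboundedI1 sup.coboundedI2)
  qed
  then show ?thesis unfolding separates_def by blast
qed

lemma separates_join_meets_right:
  assumes D: "subalgebra D" and meets: "\<And>c t. c \<in> C \<Longrightarrow> t \<in> T \<Longrightarrow> separates D X {inf c t}"
  shows "separates D X (join_meets C T)"
  using assms by (blast intro: separates_sym separates_join_meets_left)

lemma separates_gen_Un_left:
  assumes sA: "subalgebra A" and sD: "subalgebra D" and sB: "subalgebra B"
    and sS: "subalgebra S" and AB: "A \<subseteq> B" and CB: "C \<subseteq> B" and BSA: "B \<inter> S \<subseteq> A"
    and com: "commute B S" and sep: "separates D A C"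
  shows "separates D (gen (A \<union> S)) C"
proof -
  have "separates D (join_meets A S) C"
  proof (rule separates_join_meets_left[OF sD], unfold separates_singleton, intro ballI impI)
    fix a s c assume a: "a \<in> A" and s: "s \<in> S" and c: "c \<in> C" and "inf (inf a s) c = bot"
    then have "inf (inf a c) s = bot" by (simp add: ac_simps)
    moreover have "inf a c \<in> B" using a c AB CB sB by (meson subalgebra_inf subsetD)
    ultimately obtain b1 b2 where b: "b1 \<in> B \<inter> S" "b2 \<in> B \<inter> S" "inf a c \<le> b1" "s \<le> b2"
      "inf b1 b2 = bot"
      using com s unfolding commute_def by blast
    have "inf (inf a b2) c = inf (inf a c) b2" by (simp add: ac_simps)
    also have "\<dots> \<le> inf b1 b2" using b(3) by (rule inf_mono) simp
    finally have "inf (inf a b2) c = bot" using b(5) by (simp add: le_bot)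
    moreover have "inf a b2 \<in> A" using a b(2) BSA sA by (auto simp: subalgebra_inf)
    ultimately obtain d where d: "d \<in> D" "inf a b2 \<le> d" "inf d c = bot"
      using separatesD[OF sep] c by blast
    have "inf a s \<le> d" using b(4) d(2) by (meson inf_mono order_refl order_trans)
    with d show "\<exists>d\<in>D. inf a s \<le> d \<and> inf d c = bot" by blast
  qed
  then show ?thesis using gen_Un_subset_join_meets[OF sA sS] separates_mono by blast
qed

lemma separates_meet_gen_Un:
  assumes sA: "subalgebra A" and sB: "subalgebra B" and sS: "subalgebra S"
    and AB: "A \<subseteq> B" and CB: "C \<subseteq> B" and BSD: "B \<inter> S \<subseteq> D" and DA: "D \<subseteq> A"
    and com: "commute B S" and sep: "separates D A C"
    and a: "a \<in> A" and s: "s \<in> S" and c: "c \<in> C" and t: "t \<in> S"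
  shows "separates (gen (D \<union> S)) {inf a s} {inf c t}"
  unfolding separates_singletons
proof
  assume "inf (inf a s) (inf c t) = bot"
  then have "inf (inf a c) (inf s t) = bot" by (simp add: ac_simps)
  moreover have "inf a c \<in> B" using a c AB CB sB by (meson subalgebra_inf subsetD)
  moreover have "inf s t \<in> S" using s t sS by (simp add: subalgebra_inf)
  ultimately obtain b1 b2 where b: "b1 \<in> B \<inter> S" "b2 \<in> B \<inter> S" "inf a c \<le> b1" "inf s t \<le> b2"
    "inf b1 b2 = bot"
    using com unfolding commute_def by blast
  have b1D: "b1 \<in> D" using b(1) BSD by blast
  have "inf (inf a (- b1)) c = inf (inf a c) (- b1)" by (simp add: ac_simps)
  also have "\<dots> \<le> inf b1 (- b1)" using b(3) by (rule inf_mono) simp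
  finally have "inf (inf a (- b1)) c = bot" by (simp add: le_bot)
  moreover have "inf a (- b1) \<in> A" using a b1D DA sA by (auto simp: subalgebra_inf subalgebra_compl)
  ultimately obtain d0 where d0: "d0 \<in> D" "inf a (- b1) \<le> d0" "inf d0 c = bot"
    using separatesD[OF sep] c by blast
  \<comment> \<open>Split \<open>a \<sqinter> s\<close> along \<open>b\<^sub>1\<close>: outside \<open>b\<^sub>1\<close> it lies below \<open>d\<^sub>0\<close>, inside it lies below
    \<open>b\<^sub>1 \<sqinter> s\<close>, which misses \<open>c \<sqinter> t\<close> because \<open>s \<sqinter> t \<le> b\<^sub>2\<close> and \<open>b\<^sub>1 \<sqinter> b\<^sub>2 = 0\<close>.\<close>
  let ?d = "sup d0 (inf b1 s)"
  show "\<exists>d\<in>gen (D \<union> S). inf a s \<le> d \<and> inf d (inf c t) = bot"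
  proof (intro bexI conjI)
    show "?d \<in> gen (D \<union> S)"
      using gen_superset[of "D \<union> S"] d0(1) b1D s
      by (auto intro!: subalgebra_sup subalgebra_inf subalgebra_gen)
    have "inf a s = sup (inf (inf a (- b1)) s) (inf (inf a b1) s)"
      by (metis inf_sup_distrib1 inf_sup_distrib2 inf_top_right sup_compl_top sup_commute inf_commute)
    also have "\<dots> \<le> ?d"
      using d0(2) by (intro sup_mono) (auto intro: le_infI1 le_infI2)
    finally show "inf a s \<le> ?d" .
    have "inf (inf b1 s) (inf c t) \<le> inf b1 b2"
      using b(4) by (meson inf_le1 inf_le2 le_inf_iff order_trans)
    then have "inf (inf b1 s) (inf c t) = bot" using b(5) by (simp add: le_bot)
    moreover have "inf d0 (inf c t) = bot" using d0(3) by (metis inf_assoc inf_bot_left)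
    ultimately show "inf ?d (inf c t) = bot" by (simp add: inf_sup_distrib2)
  qed
qed

lemma separates_gen_Un_both:
  assumes sA: "subalgebra A" and sC: "subalgebra C" and sB: "subalgebra B" and sS: "subalgebra S"
    and AB: "A \<subseteq> B" and CB: "C \<subseteq> B" and BSD: "B \<inter> S \<subseteq> D" and DA: "D \<subseteq> A"
    and com: "commute B S" and sep: "separates D A C"
  shows "separates (gen (D \<union> S)) (gen (A \<union> S)) (gen (C \<union> S))"
proof -
  have "separates (gen (D \<union> S)) (join_meets A S) (join_meets C S)"
    using separates_meet_gen_Un[OF sA sB sS AB CB BSD DA com sep]
    by (intro separates_join_meets_left separates_join_meets_right subalgebra_gen)
  then show ?thesis
    using gen_Un_subset_join_meets[OF sA sS] gen_Un_subset_join_meets[OF sC sS] separates_mono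
    by blast
qed

lemma push_out_if_separates:
  assumes sA: "subalgebra A" and sC: "subalgebra C"
    and DA: "D \<subseteq> A" and DC: "D \<subseteq> C" and sep: "separates D A C" and gen: "gen (A \<union> C) = B"
  shows "push_out D A C B"
proof -
  have "x \<in> D" if x: "x \<in> A" "x \<in> C" for x
  proof -
    have "- x \<in> C" "inf x (- x) = bot" using sC x by (simp_all add: subalgebra_compl)
    then obtain d where d: "d \<in> D" "x \<le> d" "inf d (- x) = bot"
      using separatesD[OF sep x(1)] by blast
    have "d \<le> x" using d(3) by (simp add: inf_shunt)
    with d show "x \<in> D" by (metis order.antisym)
  qed
  then have Int: "A \<inter> C = D" using DA DC by blast
  have "commute A C"
    unfolding commute_def
  proof (intro ballI impI)
    fix a c assume "a \<in> A" "c \<in> C" "inf a c = bot"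
    then obtain d where d: "d \<in> D" "a \<le> d" "inf d c = bot" using separatesD[OF sep] by blast
    have "- d \<in> A \<inter> C" using d(1) DA DC sA sC by (auto simp: subalgebra_compl)
    moreover have "c \<le> - d" using d(3) by (simp add: inf_shunt inf_commute)
    ultimately show "\<exists>b1\<in>A \<inter> C. \<exists>b2\<in>A \<inter> C. a \<le> b1 \<and> c \<le> b2 \<and> inf b1 b2 = bot"
      using d DA DC by (intro bexI[of _ d] bexI[of _ "- d"]) auto
  qed
  then show ?thesis
    unfolding push_out_def using Int DA DC gen gen_superset[of "A \<union> C"] by blast
qed

lemma less_succ_ix: "(\<beta>::'i::wellorder) < \<gamma> \<Longrightarrow> \<beta> < succ_ix \<beta>"
  unfolding succ_ix_def by (rule LeastI)

lemma succ_ix_le: "(\<beta>::'i::wellorder) < \<gamma> \<Longrightarrow> succ_ix \<beta> \<le> \<gamma>"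
  unfolding succ_ix_def by (rule Least_le)

lemma lessThan_succ_ix:
  assumes "(\<beta>::'i::wellorder) < \<gamma>"
  shows "{..<succ_ix \<beta>} = {..\<beta>}"
proof (intro set_eqI iffI)
  fix i assume "i \<in> {..<succ_ix \<beta>}"
  then show "i \<in> {..\<beta>}" using succ_ix_le[of \<beta> i] by (auto simp: not_le[symmetric])
next
  fix i assume "i \<in> {..\<beta>}"
  then show "i \<in> {..<succ_ix \<beta>}" using less_succ_ix[OF assms] by (auto intro: le_less_trans)
qed

lemma zero_succ_limit_cases:
  fixes \<alpha> :: "'i::wellorder"
  obtains "is_zero_ix \<alpha>" | \<beta> where "\<beta> < \<alpha>" "\<alpha> = succ_ix \<beta>" | "is_limit_ix \<alpha>"
proof (cases "is_zero_ix \<alpha> \<or> is_limit_ix \<alpha>")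
  case False
  then obtain \<beta> where \<beta>: "\<beta> < \<alpha>" "\<forall>\<gamma>. \<not> (\<beta> < \<gamma> \<and> \<gamma> < \<alpha>)"
    unfolding is_zero_ix_def is_limit_ix_def by blast
  then have "\<alpha> = succ_ix \<beta>"
    using succ_ix_le[OF \<beta>(1)] less_succ_ix[OF \<beta>(1)] by (auto simp: le_less)
  then show thesis using \<beta>(1) that(2) by blast
qed (use that in blast)+

lemma tightly_sigma_filtered_subalgebra:
  "tightly_sigma_filtered \<xi> B R S \<Longrightarrow> \<alpha> \<le> \<xi> \<Longrightarrow> subalgebra (B \<alpha>)"
  unfolding tightly_sigma_filtered_def by (elim conjE) simp

lemma tightly_sigma_filtered_mono:
  "tightly_sigma_filtered \<xi> B R S \<Longrightarrow> \<alpha> \<le> \<xi> \<Longrightarrow> \<beta> \<le> \<alpha> \<Longrightarrow> B \<beta> \<subseteq> B \<alpha>"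
  unfolding tightly_sigma_filtered_def by (elim conjE) simp

lemma tightly_sigma_filtered_push_out:
  "tightly_sigma_filtered \<xi> B R S \<Longrightarrow> \<alpha> < \<xi> \<Longrightarrow>
   subalgebra (S \<alpha>) \<and> push_out (R \<alpha>) (B \<alpha>) (S \<alpha>) (B (succ_ix \<alpha>))"
  unfolding tightly_sigma_filtered_def by (elim conjE) simp

lemma E_mono: "\<Gamma> \<subseteq> \<Gamma>' \<Longrightarrow> E S \<Gamma> \<subseteq> E S \<Gamma>'"
  unfolding E_def by (rule gen_mono) blast

lemma subalgebra_E: "subalgebra (E S \<Gamma>)"
  unfolding E_def by (rule subalgebra_gen)

lemma E_Un: "gen (E S \<Gamma> \<union> E S \<Gamma>') = E S (\<Gamma> \<union> \<Gamma>')"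
  unfolding E_def by (simp add: gen_Un_gen UN_Un)

lemma E_insert: "E S (insert i \<Gamma>) = gen (E S \<Gamma> \<union> S i)"
  unfolding E_def by (metis UN_insert gen_Un_gen_left sup_commute)

lemma E_subset_B:
  assumes T: "tightly_sigma_filtered \<xi> B R S" and \<alpha>: "\<alpha> \<le> \<xi>"
  shows "E S (\<Gamma> \<inter> {..<\<alpha>}) \<subseteq> B \<alpha>"
  unfolding E_def
proof (intro gen_least UN_least)
  show "subalgebra (B \<alpha>)" using T \<alpha> by (rule tightly_sigma_filtered_subalgebra)
  fix i assume "i \<in> \<Gamma> \<inter> {..<\<alpha>}"
  then have i: "i < \<alpha>" "i < \<xi>" using \<alpha> by auto
  have "S i \<subseteq> B (succ_ix i)"
    using tightly_sigma_filtered_push_out[OF T i(2)] unfolding push_out_def by blast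
  then show "S i \<subseteq> B \<alpha>"
    using tightly_sigma_filtered_mono[OF T \<alpha> succ_ix_le[OF i(1)]] by blast
qed

lemma E_Int_lessThan_mono:
  "(\<gamma>::'i::order) \<le> \<gamma>' \<Longrightarrow> E S (\<Gamma> \<inter> {..<\<gamma>}) \<subseteq> E S (\<Gamma> \<inter> {..<\<gamma>'})"
  by (intro E_mono) (auto intro: less_le_trans)

lemma E_Int_lessThan_succ_ix:
  assumes "\<beta> < (\<gamma>::'i::wellorder)"
  shows "E S (\<Gamma> \<inter> {..<succ_ix \<beta>}) =
    (if \<beta> \<in> \<Gamma> then gen (E S (\<Gamma> \<inter> {..<\<beta>}) \<union> S \<beta>) else E S (\<Gamma> \<inter> {..<\<beta>}))"
proof -
  have "\<Gamma> \<inter> {..<succ_ix \<beta>} = (if \<beta> \<in> \<Gamma> then insert \<beta> (\<Gamma> \<inter> {..<\<beta>}) else \<Gamma> \<inter> {..<\<beta>})"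
    unfolding lessThan_succ_ix[OF assms] by (auto simp: le_less)
  then show ?thesis by (simp only: E_insert if_distrib[of "E S"])
qed

lemma E_limit:
  assumes "is_limit_ix (\<alpha>::'i::wellorder)"
  shows "E S (\<Gamma> \<inter> {..<\<alpha>}) = (\<Union>\<beta>\<in>{..<\<alpha>}. E S (\<Gamma> \<inter> {..<\<beta>}))"
proof -
  define \<X> where "\<X> = (\<lambda>\<beta>. \<Union>i\<in>\<Gamma> \<inter> {..<\<beta>}. S i) ` {..<\<alpha>}"
  have "\<Union>\<X> = (\<Union>i\<in>\<Gamma> \<inter> {..<\<alpha>}. S i)"
    using assms unfolding \<X>_def is_limit_ix_def by fastforce
  moreover have "gen (\<Union>\<X>) = (\<Union>X\<in>\<X>. gen X)"
  proof (rule gen_Union_directed)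
    show "\<X> \<noteq> {}" using assms unfolding \<X>_def is_limit_ix_def by blast
    fix X Y assume "X \<in> \<X>" "Y \<in> \<X>"
    then obtain \<beta> \<gamma> where "\<beta> < \<alpha>" "\<gamma> < \<alpha>" "X = (\<Union>i\<in>\<Gamma> \<inter> {..<\<beta>}. S i)"
      "Y = (\<Union>i\<in>\<Gamma> \<inter> {..<\<gamma>}. S i)"
      unfolding \<X>_def by blast
    then show "\<exists>Z\<in>\<X>. X \<union> Y \<subseteq> Z"
      unfolding \<X>_def
      by (intro bexI[of _ "\<Union>i\<in>\<Gamma> \<inter> {..<max \<beta> \<gamma>}. S i"]) (auto simp: less_max_iff_disj)
  qed
  ultimately show ?thesis unfolding E_def \<X>_def by simp
qed

context
  fixes \<xi> :: "'i::wellorder" and B R S :: "'i \<Rightarrow> 'a::boolean_algebra set" and \<Gamma>1 \<Gamma>2 :: "'i set"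
begin

abbreviation separates_below :: "'i \<Rightarrow> bool" where
  "separates_below \<alpha> \<equiv>
     separates (E S (\<Gamma>1 \<inter> \<Gamma>2 \<inter> {..<\<alpha>})) (E S (\<Gamma>1 \<inter> {..<\<alpha>})) (E S (\<Gamma>2 \<inter> {..<\<alpha>}))"

lemma separates_below_succ:
  assumes T: "tightly_sigma_filtered \<xi> B R S" and \<beta>: "\<beta> < \<xi>"
    and sat1: "saturated R S \<Gamma>1" and sat2: "saturated R S \<Gamma>2"
    and sat12: "saturated R S (\<Gamma>1 \<inter> \<Gamma>2)" and IH: "separates_below \<beta>"
  shows "separates_below (succ_ix \<beta>)"
proof -
  define A C D where "A = E S (\<Gamma>1 \<inter> {..<\<beta>})" and "C = E S (\<Gamma>2 \<inter> {..<\<beta>})"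
    and "D = E S (\<Gamma>1 \<inter> \<Gamma>2 \<inter> {..<\<beta>})"
  have sep: "separates D A C" using IH unfolding A_def C_def D_def .
  have sA: "subalgebra A" and sC: "subalgebra C" and sD: "subalgebra D"
    unfolding A_def C_def D_def by (rule subalgebra_E)+
  have sB: "subalgebra (B \<beta>)" using T \<beta> by (simp add: tightly_sigma_filtered_subalgebra)
  have sS: "subalgebra (S \<beta>)" and "push_out (R \<beta>) (B \<beta>) (S \<beta>) (B (succ_ix \<beta>))"
    using tightly_sigma_filtered_push_out[OF T \<beta>] by auto
  then have BS: "B \<beta> \<inter> S \<beta> = R \<beta>" and com: "commute (B \<beta>) (S \<beta>)"
    unfolding push_out_def by auto
  have AB: "A \<subseteq> B \<beta>" and CB: "C \<subseteq> B \<beta>"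
    unfolding A_def C_def using E_subset_B[OF T] \<beta> by auto
  have DA: "D \<subseteq> A" unfolding A_def D_def by (auto intro!: E_mono)
  have RA: "\<beta> \<in> \<Gamma>1 \<Longrightarrow> R \<beta> \<subseteq> A" using sat1 unfolding saturated_def A_def by blast
  have RC: "\<beta> \<in> \<Gamma>2 \<Longrightarrow> R \<beta> \<subseteq> C" using sat2 unfolding saturated_def C_def by blast
  have RD: "\<beta> \<in> \<Gamma>1 \<inter> \<Gamma>2 \<Longrightarrow> R \<beta> \<subseteq> D" using sat12 unfolding saturated_def D_def by blast
  note step = E_Int_lessThan_succ_ix[OF \<beta>]
  consider "\<beta> \<in> \<Gamma>1" "\<beta> \<in> \<Gamma>2" | "\<beta> \<in> \<Gamma>1" "\<beta> \<notin> \<Gamma>2" | "\<beta> \<notin> \<Gamma>1" "\<beta> \<in> \<Gamma>2" | "\<beta> \<notin> \<Gamma>1" "\<beta> \<notin> \<Gamma>2"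
    by blast
  then show ?thesis
  proof cases
    case 1
    then have "separates (gen (D \<union> S \<beta>)) (gen (A \<union> S \<beta>)) (gen (C \<union> S \<beta>))"
      using RD BS by (intro separates_gen_Un_both[OF sA sC sB sS AB CB _ DA com sep]) auto
    with 1 show ?thesis by (simp add: step A_def C_def D_def)
  next
    case 2
    then have "separates D (gen (A \<union> S \<beta>)) C"
      using RA BS by (intro separates_gen_Un_left[OF sA sD sB sS AB CB _ com sep]) auto
    with 2 show ?thesis by (simp add: step A_def C_def D_def)
  next
    case 3
    then have "separates D (gen (C \<union> S \<beta>)) A"
      using RC BS by (intro separates_gen_Un_left[OF sC sD sB sS CB AB _ com separates_sym[OF sD sep]]) auto
    then have "separates D A (gen (C \<union> S \<beta>))" by (rule separates_sym[OF sD])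
    with 3 show ?thesis by (simp add: step A_def C_def D_def)
  next
    case 4
    with sep show ?thesis by (simp add: step A_def C_def D_def)
  qed
qed

lemma separates_below_limit:
  assumes \<alpha>: "is_limit_ix \<alpha>" and IH: "\<And>\<beta>. \<beta> < \<alpha> \<Longrightarrow> separates_below \<beta>"
  shows "separates_below \<alpha>"
  unfolding separates_def
proof (intro ballI impI)
  fix x y assume "x \<in> E S (\<Gamma>1 \<inter> {..<\<alpha>})" "y \<in> E S (\<Gamma>2 \<inter> {..<\<alpha>})" and xy: "inf x y = bot"
  then obtain \<beta>1 \<beta>2 where \<beta>1: "\<beta>1 < \<alpha>" "x \<in> E S (\<Gamma>1 \<inter> {..<\<beta>1})"
    and \<beta>2: "\<beta>2 < \<alpha>" "y \<in> E S (\<Gamma>2 \<inter> {..<\<beta>2})"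
    using E_limit[OF \<alpha>] by blast
  define \<beta> where "\<beta> = max \<beta>1 \<beta>2"
  have \<beta>: "\<beta> < \<alpha>" using \<beta>1 \<beta>2 unfolding \<beta>_def by simp
  have "x \<in> E S (\<Gamma>1 \<inter> {..<\<beta>})" "y \<in> E S (\<Gamma>2 \<inter> {..<\<beta>})"
    using \<beta>1(2) \<beta>2(2) unfolding \<beta>_def by (meson E_Int_lessThan_mono max.cobounded1 max.cobounded2 subsetD)+
  then obtain d where d: "d \<in> E S (\<Gamma>1 \<inter> \<Gamma>2 \<inter> {..<\<beta>})" "x \<le> d" "inf d y = bot"
    using separatesD[OF IH[OF \<beta>]] xy by blast
  moreover have "E S (\<Gamma>1 \<inter> \<Gamma>2 \<inter> {..<\<beta>}) \<subseteq> E S (\<Gamma>1 \<inter> \<Gamma>2 \<inter> {..<\<alpha>})"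
    using \<beta> by (simp add: E_Int_lessThan_mono)
  ultimately show "\<exists>d\<in>E S (\<Gamma>1 \<inter> \<Gamma>2 \<inter> {..<\<alpha>}). x \<le> d \<and> inf d y = bot" by blast
qed

lemma separates_below_all:
  assumes T: "tightly_sigma_filtered \<xi> B R S" and "saturated R S \<Gamma>1" "saturated R S \<Gamma>2"
    "saturated R S (\<Gamma>1 \<inter> \<Gamma>2)"
  shows "\<alpha> \<le> \<xi> \<Longrightarrow> separates_below \<alpha>"
proof (induction \<alpha> rule: less_induct)
  case (less \<alpha>)
  show ?case
  proof (cases \<alpha> rule: zero_succ_limit_cases)
    case 1
    then have "\<Gamma> \<inter> {..<\<alpha>} = {}" for \<Gamma> :: "'i set" unfolding is_zero_ix_def by auto
    then show ?thesis unfolding separates_def by (metis order_refl)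
  next
    case (2 \<beta>)
    then show ?thesis using separates_below_succ[OF T] assms less by simp
  next
    case 3
    then show ?thesis using separates_below_limit less by simp
  qed
qed

end

theorem lemma3p2:
  fixes \<xi> :: "'i::wellorder"
    and B R S :: "'i \<Rightarrow> 'a::boolean_algebra set"
    and \<Gamma>1 \<Gamma>2 :: "'i set"
  assumes "tightly_sigma_filtered \<xi> B R S"
    and "\<Gamma>1 \<subseteq> {..<\<xi>}" and "\<Gamma>2 \<subseteq> {..<\<xi>}"
    and "saturated R S \<Gamma>1" and "saturated R S \<Gamma>2" and "saturated R S (\<Gamma>1 \<inter> \<Gamma>2)"
  shows "push_out (E S (\<Gamma>1 \<inter> \<Gamma>2)) (E S \<Gamma>1) (E S \<Gamma>2) (E S (\<Gamma>1 \<union> \<Gamma>2))"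
proof (rule push_out_if_separates)
  have "\<Gamma>1 \<inter> {..<\<xi>} = \<Gamma>1" "\<Gamma>2 \<inter> {..<\<xi>} = \<Gamma>2" "\<Gamma>1 \<inter> \<Gamma>2 \<inter> {..<\<xi>} = \<Gamma>1 \<inter> \<Gamma>2"
    using assms(2,3) by auto
  then show "separates (E S (\<Gamma>1 \<inter> \<Gamma>2)) (E S \<Gamma>1) (E S \<Gamma>2)"
    using separates_below_all[OF assms(1,4-6) order_refl] by simp
qed (simp_all add: subalgebra_E E_mono E_Un)

end
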